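(* Assume $\operatorname{tr}(C)>0$ and $\theta_0\neq\theta_*$. Let $N\ge1$, $\alpha=\min\Big\{\frac{\|\theta_0-\theta_*\|}{2\sqrt{\operatorname{tr}(C)}\,N^{3/2}},\frac1L\Big\}$ and $\beta\in[0,\min\{N\alpha,1/L\}]$, and run the noisy algorithm with these parameters. Then $$\mathbb{E}f(\theta_N)-f(\theta_* )\le\frac{2L\|\theta_0-\theta_*\|^2}{N^2}+\frac{4\sqrt{\operatorname{tr}(C)}\,\|\theta_0-\theta_*\|}{\sqrt N}.$$
   Context: Let $H\in\mathbb{R}^{d\times d}$ be symmetric positive definite with largest eigenvalue $L$, $q\in\mathbb{R}^d$, $f(\theta)=\frac12\langle\theta,H\theta\rangle-\langle q,\theta\rangle$, $\theta_*=H^{-1}q$. Let $(\varepsilon_n)_{n\ge2}$ be random vectors in $\mathbb{R}^d$ with $\mathbb{E}\varepsilon_n=0$, $\mathbb{E}[\varepsilon_n\varepsilon_m^\top]=0$ for $n\neq m$, and $\mathbb{E}[\varepsilon_n\varepsilon_n^\top]=C$ for all $n$. The noisy algorithm with parameters $\alpha,\beta$: given deterministic $\theta_0$, set $\theta_1=\theta_0$ and for $n\ge1$ $$\theta_{n+1}=\frac{2n}{n+1}\theta_n-\frac{n-1}{n+1}\theta_{n-1}-\frac{1}{n+1}\Big(n(\alpha+\beta)H(\theta_n-\theta_* )-(n-1)\beta H(\theta_{n-1}-\theta_* )-(n\alpha+\beta)\varepsilon_{n+1}\Big).$$ *)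

theory Defs
  imports "HOL-Analysis.Analysis" "HOL-Probability.Probability"
begin

definition quad_obj :: "real^'d^'d \<Rightarrow> real^'d \<Rightarrow> real^'d \<Rightarrow> real" where
  "quad_obj H q \<theta> = (1/2) * (\<theta> \<bullet> (H *v \<theta>)) - q \<bullet> \<theta>"

text \<open>The noisy algorithm, for a fixed realization e of the noise (e n = epsilon_n). Index k = Suc n >= 1 gives
  theta_(k+1) from theta_k, theta_(k-1), epsilon_(k+1).\<close>
fun noisy_alg :: "real^'d^'d \<Rightarrow> real^'d \<Rightarrow> real \<Rightarrow> real \<Rightarrow> real^'d \<Rightarrow> (nat \<Rightarrow> real^'d) \<Rightarrow> nat \<Rightarrow> real^'d" where
  "noisy_alg H ts a b t0 e 0 = t0"
| "noisy_alg H ts a b t0 e (Suc 0) = t0"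
| "noisy_alg H ts a b t0 e (Suc (Suc n)) =
     (let k = real (Suc n); x = noisy_alg H ts a b t0 e (Suc n); y = noisy_alg H ts a b t0 e n in
      (2 * k / (k + 1)) *\<^sub>R x - ((k - 1) / (k + 1)) *\<^sub>R y
      - (1 / (k + 1)) *\<^sub>R ((k * (a + b)) *\<^sub>R (H *v (x - ts))
                           - ((k - 1) * b) *\<^sub>R (H *v (y - ts))
                           - (k * a + b) *\<^sub>R e (Suc (Suc n))))"

end

theory Submission
  imports Defs
begin

text \<open>Diagonalise \<open>H\<close> in an orthonormal eigenbasis. Along an eigenvector \<open>v\<close> with eigenvalue
  \<open>h\<close>, the scaled error \<open>n (v \<bullet> (\<theta>\<^sub>n - \<theta>\<^sub>*))\<close> satisfies the recurrence of the Lucas sequence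
  \<open>U\<^sub>n(2 - (\<alpha> + \<beta>) h, 1 - \<beta> h)\<close>, forced by the noise; hence it is \<open>U\<^sub>N (v \<bullet> (\<theta>\<^sub>0 - \<theta>\<^sub>*))\<close> plus
  a \<open>U\<close>-weighted sum of the noise terms. As the noise is centred and uncorrelated, the second
  moment of this sum is a sum of squares, and the uniform bound \<open>\<alpha> h U\<^sub>m\<^sup>2 \<le> 7/3\<close> gives
  \<open>E f(\<theta>\<^sub>N) - f(\<theta>\<^sub>*) \<le> 7 / (6 \<alpha> N\<^sup>2) (norm (\<theta>\<^sub>0 - \<theta>\<^sub>*)\<^sup>2 + tr C \<Sum>k=2..N. ((k - 1) \<alpha> + \<beta>)\<^sup>2)\<close>.
  The chosen \<open>\<alpha>\<close> balances the two terms.\<close>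

section \<open>Lucas sequences\<close>

fun lucas_U :: "real \<Rightarrow> real \<Rightarrow> nat \<Rightarrow> real" where
  "lucas_U a b 0 = 0"
| "lucas_U a b (Suc 0) = 1"
| "lucas_U a b (Suc (Suc n)) = a * lucas_U a b (Suc n) - b * lucas_U a b n"

lemma lucas_U_invariant:
  "(lucas_U a b (Suc n))\<^sup>2 - a * lucas_U a b (Suc n) * lucas_U a b n + b * (lucas_U a b n)\<^sup>2 = b ^ n"
proof (induction n)
  case (Suc n)
  have "(lucas_U a b (Suc (Suc n)))\<^sup>2 - a * lucas_U a b (Suc (Suc n)) * lucas_U a b (Suc n)
        + b * (lucas_U a b (Suc n))\<^sup>2
      = b * ((lucas_U a b (Suc n))\<^sup>2 - a * lucas_U a b (Suc n) * lucas_U a b n + b * (lucas_U a b n)\<^sup>2)"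
    by (simp add: power2_eq_square algebra_simps)
  with Suc show ?case by simp
qed simp

lemma lucas_U_Suc_roots:
  assumes "r + s = a" "r * s = b"
  shows "lucas_U a b (Suc n) = r * lucas_U a b n + s ^ n"
proof (induction n)
  case (Suc n)
  then show ?case by (simp add: assms[symmetric] algebra_simps)
qed simp

lemma one_minus_mult_power_le_one:
  fixes r :: real
  assumes "0 \<le> r" "r \<le> 1"
  shows "(1 - r) * (real n + 1) * r ^ n \<le> 1"
proof -
  have "(real n + 1) * r ^ n = (\<Sum>i<Suc n. r ^ n)" by simp
  also have "\<dots> \<le> (\<Sum>i<Suc n. r ^ i)"
    by (intro sum_mono power_decreasing) (use assms in auto)
  finally have "(1 - r) * ((real n + 1) * r ^ n) \<le> (1 - r) * (\<Sum>i<Suc n. r ^ i)"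
    using assms by (intro mult_left_mono) auto
  also have "\<dots> = 1 - r ^ Suc n"
    using power_diff_1_eq[of r "Suc n"] by (simp only: left_diff_distrib')
  also have "\<dots> \<le> 1" using assms by simp
  finally show ?thesis by (simp add: mult.assoc)
qed

text \<open>With real roots \<open>0 \<le> s \<le> r < 1\<close> of \<open>t\<^sup>2 - a t + b\<close>, both \<open>(1 - r) U\<close> and \<open>(1 - s) U\<close>
  stay in \<open>[0, 1]\<close>, and \<open>x = (1 - r)(1 - s)\<close>.\<close>
lemma lucas_U_bound_real_roots:
  fixes x y :: real
  assumes x: "0 < x" "x \<le> 1" and y: "0 \<le> y" "y \<le> 1" and disc: "4 * (1 - y) \<le> (2 - x - y)\<^sup>2"
  shows "x * (lucas_U (2 - x - y) (1 - y) n)\<^sup>2 \<le> 1"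
proof -
  define a where "a = 2 - x - y"
  define b where "b = 1 - y"
  define d where "d = sqrt (a\<^sup>2 - 4 * b)"
  define r where "r = (a + d) / 2"
  define s where "s = (a - d) / 2"
  have d: "0 \<le> d" "d\<^sup>2 = a\<^sup>2 - 4 * b" using disc by (simp_all add: d_def a_def b_def)
  have "d \<le> sqrt (a\<^sup>2)" unfolding d_def using y by (intro real_sqrt_le_mono) (simp add: b_def)
  hence "d \<le> a" using x y d by (auto simp: a_def)
  hence s0: "0 \<le> s" "s \<le> r" using d by (simp_all add: r_def s_def)
  have sum: "r + s = a" by (simp add: r_def s_def field_simps)
  have prod: "r * s = b"
    using d by (simp add: r_def s_def power2_eq_square algebra_simps)
  have xrs: "(1 - r) * (1 - s) = x"
    using sum prod by (simp add: a_def b_def algebra_simps)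
  have r1: "r < 1"
  proof (rule ccontr)
    assume "\<not> r < 1"
    hence "1 - s < 0" using mult_nonpos_nonneg[of "1 - r" "1 - s"] xrs x by linarith
    with \<open>\<not> r < 1\<close> sum x y show False by (simp add: a_def)
  qed
  have U_r: "\<And>n. lucas_U a b (Suc n) = r * lucas_U a b n + s ^ n"
    by (rule lucas_U_Suc_roots[OF sum prod])
  have U_s: "\<And>n. lucas_U a b (Suc n) = s * lucas_U a b n + r ^ n"
    by (rule lucas_U_Suc_roots) (use sum prod in \<open>simp_all add: algebra_simps\<close>)
  have U_nonneg: "0 \<le> lucas_U a b n" for n
  proof (induction n)
    case (Suc n)
    then show ?case using U_r[of n] s0 by simp
  qed simp
  have U_le: "(1 - t) * lucas_U a b n \<le> 1"
    if "0 \<le> t" "t < 1" "0 \<le> t'" "t' \<le> 1" and U_t: "\<And>n. lucas_U a b (Suc n) = t * lucas_U a b n + t' ^ n"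
    for t t' n
  proof (induction n)
    case (Suc n)
    have "(1 - t) * lucas_U a b (Suc n) = t * ((1 - t) * lucas_U a b n) + (1 - t) * t' ^ n"
      using U_t[of n] by (simp add: algebra_simps)
    also have "\<dots> \<le> t * 1 + (1 - t) * 1"
      using Suc that by (intro add_mono mult_left_mono power_le_one) auto
    finally show ?case by simp
  qed simp
  have "x * (lucas_U a b n)\<^sup>2 = ((1 - r) * lucas_U a b n) * ((1 - s) * lucas_U a b n)"
    by (simp add: xrs[symmetric] power2_eq_square algebra_simps)
  also have "\<dots> \<le> 1 * 1"
    using U_le[of r s n, OF _ r1 _ _ U_r] U_le[of s r n, OF _ _ _ _ U_s] s0 r1 U_nonneg[of n]
    by (intro mult_mono) auto
  finally show ?thesis by (simp add: a_def b_def)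
qed

lemma lucas_U_invariant_completed:
  "(lucas_U a b (Suc n) - a / 2 * lucas_U a b n)\<^sup>2 + (b - a\<^sup>2 / 4) * (lucas_U a b n)\<^sup>2 = b ^ n"
  using lucas_U_invariant[of a b n] by (simp add: power2_eq_square algebra_simps)

lemma lucas_U_square_le:
  "(4 * b - a\<^sup>2) * (lucas_U a b n)\<^sup>2 \<le> 4 * b ^ n"
proof -
  have "(b - a\<^sup>2 / 4) * (lucas_U a b n)\<^sup>2 \<le> b ^ n"
    using lucas_U_invariant_completed[of a b n]
      zero_le_power2[of "lucas_U a b (Suc n) - a / 2 * lucas_U a b n"] by linarith
  moreover have "(4 * b - a\<^sup>2) * (lucas_U a b n)\<^sup>2 = 4 * ((b - a\<^sup>2 / 4) * (lucas_U a b n)\<^sup>2)"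
    by (simp add: algebra_simps)
  ultimately show ?thesis by linarith
qed

lemma lucas_U_abs_le:
  assumes "0 \<le> a" "a\<^sup>2 \<le> 4 * b"
  shows "\<bar>lucas_U a b (Suc n)\<bar> \<le> (real n + 1) * sqrt b ^ n"
proof -
  define \<rho> where "\<rho> = sqrt b"
  have b: "0 \<le> b" using assms(2) zero_le_power2[of a] by linarith
  have "(a / 2)\<^sup>2 \<le> b" using assms(2) by (simp add: power_divide)
  hence "a / 2 \<le> \<rho>" unfolding \<rho>_def by (rule real_le_rsqrt)
  hence \<rho>: "0 \<le> \<rho>" "\<rho>\<^sup>2 = b" "a / 2 \<le> \<rho>"
    using b by (simp_all add: \<rho>_def)
  have step: "\<bar>lucas_U a b (Suc m)\<bar> \<le> \<rho> * \<bar>lucas_U a b m\<bar> + \<rho> ^ m" for m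
  proof -
    have "0 \<le> (b - a\<^sup>2 / 4) * (lucas_U a b m)\<^sup>2" using assms by simp
    moreover have "(\<rho> ^ m)\<^sup>2 = b ^ m" using \<rho>(2) by (metis power_mult mult.commute)
    ultimately have "(lucas_U a b (Suc m) - a / 2 * lucas_U a b m)\<^sup>2 \<le> (\<rho> ^ m)\<^sup>2"
      using lucas_U_invariant_completed[of a b m] by linarith
    hence "\<bar>lucas_U a b (Suc m) - a / 2 * lucas_U a b m\<bar> \<le> \<rho> ^ m"
      using \<rho>(1) by (simp add: power2_le_iff_abs_le)
    moreover have "\<bar>a / 2 * lucas_U a b m\<bar> \<le> \<rho> * \<bar>lucas_U a b m\<bar>"
      using assms(1) mult_right_mono[OF \<rho>(3) abs_ge_zero] by (simp add: abs_mult)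
    ultimately show ?thesis by linarith
  qed
  show ?thesis unfolding \<rho>_def[symmetric]
  proof (induction n)
    case (Suc n)
    have "\<bar>lucas_U a b (Suc (Suc n))\<bar> \<le> \<rho> * ((real n + 1) * \<rho> ^ n) + \<rho> ^ Suc n"
      using step[of "Suc n"] Suc \<rho>(1) by (smt (verit) mult_left_mono)
    thus ?case by (simp add: algebra_simps)
  qed simp
qed

lemma lucas_U_bound_near_double_root:
  assumes a: "0 \<le> a" "a\<^sup>2 \<le> 4 * b" and b: "b \<le> 1" and x: "x \<le> 7/3 * (1 - sqrt b)\<^sup>2"
  shows "x * (lucas_U a b (Suc n))\<^sup>2 \<le> 7/3"
proof -
  define \<rho> where "\<rho> = sqrt b"
  have "0 \<le> b" using a(2) zero_le_power2[of a] by linarith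
  hence \<rho>: "0 \<le> \<rho>" "\<rho> \<le> 1" using b by (simp_all add: \<rho>_def)
  have "(lucas_U a b (Suc n))\<^sup>2 \<le> ((real n + 1) * \<rho> ^ n)\<^sup>2"
    using lucas_U_abs_le[OF a, of n] \<rho>(1) unfolding \<rho>_def by (simp add: power2_le_iff_abs_le)
  hence "x * (lucas_U a b (Suc n))\<^sup>2 \<le> 7/3 * (1 - \<rho>)\<^sup>2 * ((real n + 1) * \<rho> ^ n)\<^sup>2"
    using x unfolding \<rho>_def[symmetric] by (intro mult_mono) auto
  also have "\<dots> = 7/3 * ((1 - \<rho>) * (real n + 1) * \<rho> ^ n)\<^sup>2"
    by (simp add: power_mult_distrib)
  also have "\<dots> \<le> 7/3 * 1"
    using one_minus_mult_power_le_one[OF \<rho>, of n] \<rho> by (intro mult_left_mono power_le_one) auto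
  finally show ?thesis by simp
qed

text \<open>With complex roots of modulus \<open>\<rho> = sqrt (1 - y)\<close>, write \<open>x = (1 - \<rho>)\<^sup>2 + t\<close>: for small \<open>t\<close>
  the polynomial bound on \<open>U\<close> suffices, for large \<open>t\<close> the discriminant \<open>4b - a\<^sup>2 = t (2\<rho> + a)\<close>
  controls \<open>U\<^sup>2\<close>.\<close>
lemma lucas_U_bound_complex_roots:
  fixes x y :: real
  assumes x: "0 < x" "x \<le> 1" and y: "0 \<le> y" "y \<le> 1" and disc: "(2 - x - y)\<^sup>2 < 4 * (1 - y)"
  shows "x * (lucas_U (2 - x - y) (1 - y) (Suc n))\<^sup>2 \<le> 7/3"
proof -
  define a where "a = 2 - x - y"
  define b where "b = 1 - y"
  define \<rho> where "\<rho> = sqrt b"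
  define t where "t = 2 * \<rho> - a"
  have a: "0 \<le> a" "b \<le> a" "a\<^sup>2 < 4 * b" using x y disc by (auto simp: a_def b_def)
  have b: "0 \<le> b" "b \<le> 1" using y by (simp_all add: b_def)
  have \<rho>: "0 \<le> \<rho>" "\<rho> \<le> 1" "\<rho>\<^sup>2 = b" using b by (simp_all add: \<rho>_def)
  have xt: "x = (1 - \<rho>)\<^sup>2 + t"
    using \<rho>(3) by (simp add: t_def a_def b_def power2_eq_square algebra_simps)
  have "x * (lucas_U a b (Suc n))\<^sup>2 \<le> 7/3"
  proof (cases "t \<le> 4/3 * (1 - \<rho>)\<^sup>2")
    case True
    hence "x \<le> 7/3 * (1 - sqrt b)\<^sup>2" using xt by (simp add: \<rho>_def)
    with a b show ?thesis by (intro lucas_U_bound_near_double_root) auto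
  next
    case False
    hence t: "0 < t" "x \<le> 7/4 * t" using xt zero_le_power2[of "1 - \<rho>"] by linarith+
    have \<rho>_pos: "0 < \<rho>" using t a by (simp add: t_def)
    have disc_t: "4 * b - a\<^sup>2 = t * (2 * \<rho> + a)"
      using \<rho>(3) by (simp add: t_def power2_eq_square algebra_simps)
    have "b ^ Suc n \<le> b"
      using mult_left_mono[OF power_le_one[OF b, of n] b(1)] by simp
    hence "(2 * \<rho> + a) * (t * (lucas_U a b (Suc n))\<^sup>2) \<le> 4 * b"
      using lucas_U_square_le[of b a "Suc n"] unfolding disc_t by (simp add: mult_ac)
    hence tU: "t * (lucas_U a b (Suc n))\<^sup>2 \<le> 4 * b / (2 * \<rho> + a)"
      using \<rho>_pos a(1) by (simp add: pos_le_divide_eq mult.commute)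
    have "x * (lucas_U a b (Suc n))\<^sup>2 \<le> 7/4 * t * (lucas_U a b (Suc n))\<^sup>2"
      using t(2) by (rule mult_right_mono) simp
    also have "\<dots> \<le> 7/4 * (4 * b / (2 * \<rho> + a))"
      using mult_left_mono[OF tU, of "7/4"] by (simp only: mult.assoc)
    also have "\<dots> = 7 * b / (2 * \<rho> + a)" by simp
    also have "\<dots> \<le> 7 * b / (2 * \<rho> + b)"
      using a b \<rho>_pos by (intro divide_left_mono mult_pos_pos) auto
    also have "\<dots> = (\<rho> * (7 * \<rho>)) / (\<rho> * (2 + \<rho>))"
      unfolding \<rho>(3)[symmetric] by (simp add: power2_eq_square algebra_simps)
    also have "\<dots> = 7 * \<rho> / (2 + \<rho>)"
      using \<rho>_pos by (rule mult_divide_mult_cancel_left[OF less_imp_neq[symmetric]])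
    also have "\<dots> \<le> 7/3" using \<rho> by (simp add: divide_le_eq)
    finally show ?thesis .
  qed
  thus ?thesis by (simp add: a_def b_def)
qed

lemma lucas_U_bound:
  fixes x y :: real
  assumes "0 < x" "x \<le> 1" "0 \<le> y" "y \<le> 1"
  shows "x * (lucas_U (2 - x - y) (1 - y) n)\<^sup>2 \<le> 7/3"
proof (cases "4 * (1 - y) \<le> (2 - x - y)\<^sup>2")
  case True
  with lucas_U_bound_real_roots[OF assms True, of n] show ?thesis by linarith
next
  case False
  hence disc: "(2 - x - y)\<^sup>2 < 4 * (1 - y)" by simp
  show ?thesis
  proof (cases n)
    case (Suc m)
    show ?thesis unfolding Suc by (rule lucas_U_bound_complex_roots[OF assms disc])
  qed simp
qed

lemma lucas_convolution_step:
  fixes w :: "nat \<Rightarrow> real"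
  shows "(\<Sum>k=2..Suc (Suc n). w k * lucas_U a b (Suc (Suc (Suc n)) - k))
    = a * (\<Sum>k=2..Suc n. w k * lucas_U a b (Suc (Suc n) - k))
      - b * (\<Sum>k=2..n. w k * lucas_U a b (Suc n - k)) + w (Suc (Suc n))"
proof -
  have "(\<Sum>k=2..Suc n. w k * lucas_U a b (Suc (Suc (Suc n)) - k))
      = (\<Sum>k=2..Suc n. a * (w k * lucas_U a b (Suc (Suc n) - k)) - b * (w k * lucas_U a b (Suc n - k)))"
  proof (rule sum.cong)
    fix k assume "k \<in> {2..Suc n}"
    hence "Suc (Suc (Suc n)) - k = Suc (Suc (Suc n - k))" "Suc (Suc n) - k = Suc (Suc n - k)" by auto
    thus "w k * lucas_U a b (Suc (Suc (Suc n)) - k)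
        = a * (w k * lucas_U a b (Suc (Suc n) - k)) - b * (w k * lucas_U a b (Suc n - k))"
      by (simp add: algebra_simps)
  qed simp
  also have "\<dots> = a * (\<Sum>k=2..Suc n. w k * lucas_U a b (Suc (Suc n) - k))
      - b * (\<Sum>k=2..Suc n. w k * lucas_U a b (Suc n - k))"
    by (simp only: sum_subtractf sum_distrib_left)
  also have "(\<Sum>k=2..Suc n. w k * lucas_U a b (Suc n - k)) = (\<Sum>k=2..n. w k * lucas_U a b (Suc n - k))"
    by (simp add: sum.cl_ivl_Suc)
  finally show ?thesis by (simp add: sum.cl_ivl_Suc[of _ 2 "Suc n"])
qed

text \<open>Variation of constants for the recurrence defining \<open>lucas_U\<close>: the forcing term \<open>w k\<close>
  enters with the impulse response \<open>U (n + 1 - k)\<close>.\<close>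
lemma lucas_recurrence_solution:
  fixes u w :: "nat \<Rightarrow> real"
  assumes "u 0 = 0" and rec: "\<And>n. u (Suc (Suc n)) = a * u (Suc n) - b * u n + w (Suc (Suc n))"
  shows "u n = lucas_U a b n * u 1 + (\<Sum>k=2..n. w k * lucas_U a b (Suc n - k))"
proof (induction n rule: induct_nat_012)
  case (ge2 n)
  have "u (Suc (Suc n)) = a * (lucas_U a b (Suc n) * u 1 + (\<Sum>k=2..Suc n. w k * lucas_U a b (Suc (Suc n) - k)))
      - b * (lucas_U a b n * u 1 + (\<Sum>k=2..n. w k * lucas_U a b (Suc n - k))) + w (Suc (Suc n))"
    using rec ge2 by simp
  also have "\<dots> = lucas_U a b (Suc (Suc n)) * u 1
      + (\<Sum>k=2..Suc (Suc n). w k * lucas_U a b (Suc (Suc (Suc n)) - k))"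
    unfolding lucas_convolution_step by (simp add: algebra_simps)
  finally show ?case .
qed (simp_all add: assms(1))

section \<open>Symmetric matrices\<close>

lemma symmetric_matrix_inner_commute:
  fixes H :: "real^'n^'n"
  assumes "transpose H = H"
  shows "(H *v x) \<bullet> y = x \<bullet> (H *v y)"
  by (metis assms dot_lmul_matrix vector_transpose_matrix)

lemma quadratic_nonpos_imp_linear_coeff_zero:
  fixes a c :: real
  assumes "\<And>t. t * a + t\<^sup>2 * c \<le> 0"
  shows "a = 0"
proof (rule ccontr)
  assume "a \<noteq> 0"
  define s where "s = 1 / (\<bar>c\<bar> + 1)"
  have "0 < s" by (simp add: s_def)
  moreover have "0 < 1 + s * c"
  proof -
    have "\<bar>s * c\<bar> = \<bar>c\<bar> / (\<bar>c\<bar> + 1)" by (simp add: s_def abs_mult)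
    also have "\<dots> < 1" by simp
    finally show ?thesis by linarith
  qed
  ultimately have "0 < s * a\<^sup>2 * (1 + s * c)" using \<open>a \<noteq> 0\<close> by (intro mult_pos_pos) auto
  also have "\<dots> = (s * a) * a + (s * a)\<^sup>2 * c" by (simp add: power2_eq_square algebra_simps)
  also have "\<dots> \<le> 0" by (rule assms)
  finally show False by simp
qed

text \<open>The form \<open>Q z = \<mu> (z \<bullet> z) - z \<bullet> H z\<close> is nonnegative on \<open>S\<close> and vanishes at \<open>v\<close>,
  so its polar form \<open>- w \<bullet> w\<close> at \<open>v\<close> and \<open>w = H v - \<mu> v\<close> must vanish.\<close>
lemma symmetric_matrix_rayleigh_maximizer_eigenvector:
  fixes H :: "real^'n^'n"
  assumes sym: "transpose H = H" and S: "subspace S" and inv: "\<And>x. x \<in> S \<Longrightarrow> H *v x \<in> S"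
    and v: "v \<in> S" "v \<bullet> v = 1"
    and max: "\<And>z. z \<in> S \<Longrightarrow> z \<bullet> (H *v z) \<le> (v \<bullet> (H *v v)) * (z \<bullet> z)"
  shows "H *v v = (v \<bullet> (H *v v)) *\<^sub>R v"
proof -
  define \<mu> where "\<mu> = v \<bullet> (H *v v)"
  define w where "w = H *v v - \<mu> *\<^sub>R v"
  have wS: "w \<in> S" using inv[OF v(1)] v(1) S by (simp add: w_def subspace_diff subspace_scale)
  have "t * (2 * (w \<bullet> w)) + t\<^sup>2 * (w \<bullet> (H *v w) - \<mu> * (w \<bullet> w)) \<le> 0" for t
  proof -
    have Hvw: "w \<bullet> (H *v v) = w \<bullet> w + \<mu> * (v \<bullet> w)"
      by (simp add: w_def inner_diff_left inner_diff_right inner_commute algebra_simps)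
    have Hwv: "v \<bullet> (H *v w) = w \<bullet> (H *v v)"
      using symmetric_matrix_inner_commute[OF sym, of w v] by (simp add: inner_commute)
    have "v + t *\<^sub>R w \<in> S" using v(1) wS S by (simp add: subspace_add subspace_scale)
    hence "(v + t *\<^sub>R w) \<bullet> (H *v (v + t *\<^sub>R w)) \<le> \<mu> * ((v + t *\<^sub>R w) \<bullet> (v + t *\<^sub>R w))"
      unfolding \<mu>_def by (rule max)
    also have "(v + t *\<^sub>R w) \<bullet> (H *v (v + t *\<^sub>R w))
        = \<mu> + 2 * t * (w \<bullet> (H *v v)) + t\<^sup>2 * (w \<bullet> (H *v w))"
      using Hwv by (simp add: matrix_vector_right_distrib matrix_vector_mult_scaleR inner_add_left
          inner_add_right \<mu>_def power2_eq_square algebra_simps inner_commute)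
    finally have "\<mu> + 2 * t * (w \<bullet> (H *v v)) + t\<^sup>2 * (w \<bullet> (H *v w))
        \<le> \<mu> * ((v + t *\<^sub>R w) \<bullet> (v + t *\<^sub>R w))" .
    also have "(v + t *\<^sub>R w) \<bullet> (v + t *\<^sub>R w) = 1 + 2 * t * (v \<bullet> w) + t\<^sup>2 * (w \<bullet> w)"
      using v(2) by (simp add: inner_add_left inner_add_right power2_eq_square algebra_simps inner_commute)
    finally have "\<mu> + 2 * t * (w \<bullet> (H *v v)) + t\<^sup>2 * (w \<bullet> (H *v w))
        \<le> \<mu> * (1 + 2 * t * (v \<bullet> w) + t\<^sup>2 * (w \<bullet> w))" .
    moreover have "t * (2 * (w \<bullet> w)) + t\<^sup>2 * (w \<bullet> (H *v w) - \<mu> * (w \<bullet> w))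
        = (\<mu> + 2 * t * (w \<bullet> (H *v v)) + t\<^sup>2 * (w \<bullet> (H *v w)))
          - \<mu> * (1 + 2 * t * (v \<bullet> w) + t\<^sup>2 * (w \<bullet> w))"
      unfolding Hvw by (simp add: algebra_simps)
    ultimately show ?thesis by linarith
  qed
  hence "2 * (w \<bullet> w) = 0" by (rule quadratic_nonpos_imp_linear_coeff_zero)
  thus ?thesis by (simp add: w_def \<mu>_def)
qed

lemma symmetric_matrix_eigenvector_in_invariant_subspace:
  fixes H :: "real^'n^'n"
  assumes sym: "transpose H = H" and S: "subspace S" "S \<noteq> {0}"
    and inv: "\<And>x. x \<in> S \<Longrightarrow> H *v x \<in> S"
  obtains v \<mu> where "v \<in> S" "norm v = 1" "H *v v = \<mu> *\<^sub>R v"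
proof -
  define K where "K = S \<inter> sphere 0 1"
  have "compact K" unfolding K_def using S by (intro closed_Int_compact closed_subspace) auto
  moreover have "K \<noteq> {}"
  proof -
    obtain x where x: "x \<in> S" "x \<noteq> 0" using S subspace_0 by blast
    hence "(1 / norm x) *\<^sub>R x \<in> K" using S by (auto simp: K_def subspace_scale)
    thus ?thesis by blast
  qed
  moreover have "continuous_on K (\<lambda>x. x \<bullet> (H *v x))"
    by (intro continuous_intros linear_continuous_on linear_conv_bounded_linear[THEN iffD1]) simp
  ultimately obtain v where v: "v \<in> K" and v_max: "\<And>y. y \<in> K \<Longrightarrow> y \<bullet> (H *v y) \<le> v \<bullet> (H *v v)"
    using continuous_attains_sup by metis
  have vS: "v \<in> S" and v1: "v \<bullet> v = 1" using v by (auto simp: K_def dot_square_norm)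
  have "z \<bullet> (H *v z) \<le> (v \<bullet> (H *v v)) * (z \<bullet> z)" if "z \<in> S" for z
  proof (cases "z = 0")
    case False
    define c where "c = 1 / norm z"
    have "c *\<^sub>R z \<in> K" using that S False by (auto simp: K_def c_def subspace_scale)
    hence "(c *\<^sub>R z) \<bullet> (H *v (c *\<^sub>R z)) \<le> v \<bullet> (H *v v)" by (rule v_max)
    hence "c\<^sup>2 * (z \<bullet> (H *v z)) \<le> v \<bullet> (H *v v)"
      by (simp add: matrix_vector_mult_scaleR power2_eq_square mult.assoc)
    moreover have "c\<^sup>2 * (z \<bullet> z) = 1" using False by (simp add: c_def dot_square_norm power_one_over)
    ultimately show ?thesis using False by (simp add: c_def dot_square_norm field_simps)
  qed simp
  with vS v1 have "H *v v = (v \<bullet> (H *v v)) *\<^sub>R v"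
    by (intro symmetric_matrix_rayleigh_maximizer_eigenvector[OF sym S(1) inv])
  with vS v show ?thesis using that by (auto simp: K_def)
qed

lemma symmetric_matrix_orthonormal_eigenbasis_subspace:
  fixes H :: "real^'n^'n"
  assumes sym: "transpose H = H"
  shows "subspace S \<Longrightarrow> (\<And>x. x \<in> S \<Longrightarrow> H *v x \<in> S) \<Longrightarrow>
    \<exists>B. B \<subseteq> S \<and> finite B \<and> pairwise orthogonal B \<and> span B = S
      \<and> (\<forall>v\<in>B. norm v = 1 \<and> (\<exists>\<mu>. H *v v = \<mu> *\<^sub>R v))"
proof (induction "dim S" arbitrary: S rule: less_induct)
  case less
  show ?case
  proof (cases "S = {0}")
    case True
    then show ?thesis by (intro exI[of _ "{}"]) auto
  next
    case False
    obtain v \<mu> where vS: "v \<in> S" and v1: "norm v = 1" and ev: "H *v v = \<mu> *\<^sub>R v"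
      using symmetric_matrix_eigenvector_in_invariant_subspace[OF sym less.prems(1) False less.prems(2)] .
    define S' where "S' = S \<inter> {x. orthogonal v x}"
    have S': "subspace S'" unfolding S'_def
      using less.prems(1) subspace_orthogonal_to_vector[of v] by (rule subspace_inter)
    have inv': "H *v x \<in> S'" if "x \<in> S'" for x
    proof -
      have "v \<bullet> (H *v x) = \<mu> * (v \<bullet> x)"
        using symmetric_matrix_inner_commute[OF sym, of v x] ev by simp
      thus ?thesis using that less.prems(2) by (simp add: S'_def orthogonal_def)
    qed
    have "v \<notin> S'" using v1 by (auto simp: S'_def orthogonal_def)
    hence "S' \<subset> S" using vS by (auto simp: S'_def)
    hence "dim S' < dim S"
      using S' less.prems(1) by (intro dim_psubset) (metis span_eq_iff)
    then obtain B' where B': "B' \<subseteq> S'" "finite B'" "pairwise orthogonal B'" "span B' = S'"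
      "\<forall>v\<in>B'. norm v = 1 \<and> (\<exists>\<mu>. H *v v = \<mu> *\<^sub>R v)"
      using less.hyps[OF _ S' inv'] by blast
    show ?thesis
    proof (intro exI[of _ "insert v B'"] conjI)
      show "insert v B' \<subseteq> S" using B'(1) vS by (auto simp: S'_def)
      show "finite (insert v B')" using B'(2) by simp
      show "pairwise orthogonal (insert v B')"
        using B'(3) B'(1) unfolding pairwise_insert by (auto simp: S'_def orthogonal_commute)
      show "\<forall>u\<in>insert v B'. norm u = 1 \<and> (\<exists>\<mu>. H *v u = \<mu> *\<^sub>R u)" using B'(5) v1 ev by auto
      show "span (insert v B') = S"
      proof
        show "span (insert v B') \<subseteq> S"
          using \<open>insert v B' \<subseteq> S\<close> less.prems(1) by (rule span_minimal)
        show "S \<subseteq> span (insert v B')"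
        proof
          fix x assume "x \<in> S"
          hence "x - (v \<bullet> x) *\<^sub>R v \<in> S'"
            using vS less.prems(1) v1
            by (auto simp: S'_def orthogonal_def inner_diff_right subspace_diff subspace_scale
                dot_square_norm)
          hence "x - (v \<bullet> x) *\<^sub>R v \<in> span (insert v B')"
            using B'(4) span_mono[of B' "insert v B'"] by auto
          moreover have "(v \<bullet> x) *\<^sub>R v \<in> span (insert v B')"
            by (intro span_mul span_base) simp
          ultimately show "x \<in> span (insert v B')"
            using span_add by fastforce
        qed
      qed
    qed
  qed
qed

lemma symmetric_matrix_orthonormal_eigenbasis:
  fixes H :: "real^'n^'n"
  assumes "transpose H = H"
  obtains B and \<kappa> :: "real^'n \<Rightarrow> real"
  where "finite B" "pairwise orthogonal B" "span B = UNIV"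
    "\<And>v. v \<in> B \<Longrightarrow> norm v = 1" "\<And>v. v \<in> B \<Longrightarrow> H *v v = \<kappa> v *\<^sub>R v"
proof -
  obtain B where B: "finite B" "pairwise orthogonal B" "span B = UNIV"
    and eig: "\<forall>v\<in>B. norm v = 1 \<and> (\<exists>\<mu>. H *v v = \<mu> *\<^sub>R v)"
    using symmetric_matrix_orthonormal_eigenbasis_subspace[OF assms, of UNIV] by auto
  from eig obtain \<kappa> where "\<forall>v\<in>B. norm v = 1 \<and> H *v v = \<kappa> v *\<^sub>R v" by metis
  with B that show ?thesis by blast
qed

lemma orthonormal_basis_inner_expand:
  assumes "pairwise orthogonal B" "\<And>v. v \<in> B \<Longrightarrow> norm v = 1" "x \<in> span B" "finite B"
  shows "x \<bullet> y = (\<Sum>v\<in>B. (v \<bullet> x) * (v \<bullet> y))"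
proof -
  have "x \<bullet> y = (\<Sum>v\<in>B. (x \<bullet> v) *\<^sub>R v) \<bullet> y" using orthonormal_basis_expand[OF assms] by simp
  also have "\<dots> = (\<Sum>v\<in>B. (v \<bullet> x) * (v \<bullet> y))" by (simp add: inner_sum_left inner_commute[of x])
  finally show ?thesis .
qed

lemma orthonormal_basis_norm_square:
  assumes "pairwise orthogonal B" "\<And>v. v \<in> B \<Longrightarrow> norm v = 1" "span B = UNIV" "finite B"
  shows "(norm x)\<^sup>2 = (\<Sum>v\<in>B. (v \<bullet> x)\<^sup>2)"
proof -
  have "(norm x)\<^sup>2 = (\<Sum>v\<in>B. (v \<bullet> x) * (v \<bullet> x))"
    unfolding power2_norm_eq_inner using assms by (intro orthonormal_basis_inner_expand) auto
  thus ?thesis by (simp add: power2_eq_square)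
qed

lemma symmetric_matrix_eigenvector_inner:
  fixes H :: "real^'n^'n"
  assumes "transpose H = H" "H *v v = \<mu> *\<^sub>R v"
  shows "v \<bullet> (H *v z) = \<mu> * (v \<bullet> z)"
  using symmetric_matrix_inner_commute[OF assms(1), of v z] assms(2) by simp

lemma positive_eigenvalue_bounds:
  fixes H :: "real^'n^'n"
  assumes pos: "0 < v \<bullet> (H *v v)" and ev: "H *v v = \<mu> *\<^sub>R v" and L: "\<mu> \<le> L"
  shows "0 < \<mu>" and "a \<le> 1 / L \<Longrightarrow> a * \<mu> \<le> 1"
proof -
  have "0 < \<mu> * (v \<bullet> v)" "0 \<le> v \<bullet> v" using pos ev by simp_all
  thus "0 < \<mu>" using mult_nonpos_nonneg[of \<mu> "v \<bullet> v"] by linarith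
  with L have "\<mu> / L \<le> 1" by simp
  thus "a * \<mu> \<le> 1" if "a \<le> 1 / L"
    using mult_right_mono[OF that, of \<mu>] \<open>0 < \<mu>\<close> by simp
qed

lemma quadratic_form_eigenbasis_expand:
  fixes H :: "real^'n^'n"
  assumes sym: "transpose H = H" and B: "finite B" "pairwise orthogonal B" "span B = UNIV"
    "\<And>v. v \<in> B \<Longrightarrow> norm v = 1" and eig: "\<And>v. v \<in> B \<Longrightarrow> H *v v = \<kappa> v *\<^sub>R v"
  shows "z \<bullet> (H *v z) = (\<Sum>v\<in>B. \<kappa> v * (v \<bullet> z)\<^sup>2)"
proof -
  have "z \<bullet> (H *v z) = (\<Sum>v\<in>B. (v \<bullet> z) * (v \<bullet> (H *v z)))"
    using B by (intro orthonormal_basis_inner_expand) auto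
  also have "\<dots> = (\<Sum>v\<in>B. \<kappa> v * (v \<bullet> z)\<^sup>2)"
    using symmetric_matrix_eigenvector_inner[OF sym eig]
    by (intro sum.cong) (simp_all add: power2_eq_square)
  finally show ?thesis .
qed

lemma positive_definite_matrix_inv_solves:
  fixes H :: "real^'n^'n"
  assumes pd: "\<And>x. x \<noteq> 0 \<Longrightarrow> 0 < x \<bullet> (H *v x)"
  shows "H *v (matrix_inv H *v q) = q"
proof -
  have "\<forall>x. H *v x = 0 \<longrightarrow> x = 0" using pd by (metis inner_zero_right less_irrefl)
  hence "invertible H" using matrix_left_invertible_ker invertible_left_inverse by blast
  hence "H ** matrix_inv H = mat 1"
    unfolding matrix_inv_def invertible_def
    by (rule someI_ex[where P="\<lambda>A'. H ** A' = mat 1 \<and> A' ** H = mat 1", THEN conjunct1])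
  thus ?thesis by (simp add: matrix_vector_mul_assoc)
qed

section \<open>The algorithm along an eigenvector\<close>

lemma quad_obj_sub_minimizer:
  fixes H :: "real^'n^'n"
  assumes sym: "transpose H = H" and Hts: "H *v ts = q"
  shows "quad_obj H q \<theta> - quad_obj H q ts = (\<theta> - ts) \<bullet> (H *v (\<theta> - ts)) / 2"
proof -
  have "\<theta> \<bullet> (H *v ts) = q \<bullet> \<theta>" "ts \<bullet> (H *v \<theta>) = q \<bullet> \<theta>" "q \<bullet> ts = ts \<bullet> (H *v ts)"
    using symmetric_matrix_inner_commute[OF sym, of ts \<theta>] Hts by (simp_all add: inner_commute)
  moreover have "(\<theta> - ts) \<bullet> (H *v (\<theta> - ts))
      = \<theta> \<bullet> (H *v \<theta>) - \<theta> \<bullet> (H *v ts) - ts \<bullet> (H *v \<theta>) + ts \<bullet> (H *v ts)"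
    by (simp add: matrix_vector_mult_diff_distrib inner_diff_left inner_diff_right)
  ultimately show ?thesis unfolding quad_obj_def by linarith
qed

lemma noisy_alg_eigen_recurrence:
  fixes H :: "real^'n^'n" and v ts t0 :: "real^'n"
  assumes hv: "\<And>z. v \<bullet> (H *v z) = h * (v \<bullet> z)"
  shows "real (Suc (Suc n)) * (v \<bullet> (noisy_alg H ts a b t0 e (Suc (Suc n)) - ts))
    = (2 - (a + b) * h) * (real (Suc n) * (v \<bullet> (noisy_alg H ts a b t0 e (Suc n) - ts)))
      - (1 - b * h) * (real n * (v \<bullet> (noisy_alg H ts a b t0 e n - ts)))
      + ((real (Suc (Suc n)) - 1) * a + b) * (v \<bullet> e (Suc (Suc n)))"
proof -
  define k where "k = real (Suc n)"
  have k1: "k + 1 \<noteq> 0" by (simp add: k_def)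
  define x where "x = v \<bullet> (noisy_alg H ts a b t0 e (Suc n) - ts)"
  define y where "y = v \<bullet> (noisy_alg H ts a b t0 e n - ts)"
  define z where "z = v \<bullet> (noisy_alg H ts a b t0 e (Suc (Suc n)) - ts)"
  have "z = (2 * k / (k + 1)) * (x + v \<bullet> ts) - ((k - 1) / (k + 1)) * (y + v \<bullet> ts)
        - (1 / (k + 1)) * (k * (a + b) * h * x - (k - 1) * b * h * y - (k * a + b) * (v \<bullet> e (Suc (Suc n))))
        - v \<bullet> ts"
    by (simp add: Let_def k_def x_def y_def z_def inner_diff_right hv)
  hence "(k + 1) * z
      = (2 - (a + b) * h) * (k * x) - (1 - b * h) * ((k - 1) * y) + (k * a + b) * (v \<bullet> e (Suc (Suc n)))"
    using k1 by (simp add: divide_simps) algebra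
  moreover have "real (Suc (Suc n)) = k + 1" "real (Suc (Suc n)) - 1 = k" "real (Suc n) = k" "real n = k - 1"
    by (simp_all add: k_def)
  ultimately show ?thesis unfolding x_def y_def z_def by (simp only:)
qed

lemma noisy_alg_eigen_component:
  fixes H :: "real^'n^'n" and v ts t0 :: "real^'n"
  assumes "\<And>z. v \<bullet> (H *v z) = h * (v \<bullet> z)"
  shows "real n * (v \<bullet> (noisy_alg H ts a b t0 e n - ts))
    = lucas_U (2 - (a + b) * h) (1 - b * h) n * (v \<bullet> (t0 - ts))
      + (\<Sum>k=2..n. (((real k - 1) * a + b) * lucas_U (2 - (a + b) * h) (1 - b * h) (Suc n - k))
          * (v \<bullet> e k))"
  using lucas_recurrence_solution[where u = "\<lambda>n. real n * (v \<bullet> (noisy_alg H ts a b t0 e n - ts))",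
      OF _ noisy_alg_eigen_recurrence[OF assms]]
  by (simp add: algebra_simps)

section \<open>Uncorrelated noise\<close>

lemma integrable_mult_of_square_integrable:
  fixes f g :: "'a \<Rightarrow> real"
  assumes "f \<in> borel_measurable M" "g \<in> borel_measurable M"
    and "integrable M (\<lambda>x. (f x)\<^sup>2)" "integrable M (\<lambda>x. (g x)\<^sup>2)"
  shows "integrable M (\<lambda>x. f x * g x)"
proof (rule Bochner_Integration.integrable_bound)
  show "integrable M (\<lambda>x. (f x)\<^sup>2 + (g x)\<^sup>2)" using assms(3,4) by simp
  show "(\<lambda>x. f x * g x) \<in> borel_measurable M" using assms(1,2) by measurable
  have "\<bar>f x * g x\<bar> \<le> (f x)\<^sup>2 + (g x)\<^sup>2" for x
    using sum_squares_bound[of "f x" "g x"] sum_squares_bound[of "f x" "- g x"] by (simp add: abs_if)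
  thus "AE x in M. norm (f x * g x) \<le> norm ((f x)\<^sup>2 + (g x)\<^sup>2)" by simp
qed

lemma (in prob_space) expectation_square_uncorrelated_sum:
  fixes \<eta> :: "'i \<Rightarrow> 'a \<Rightarrow> real"
  assumes "finite K"
    and int: "\<And>k. k \<in> K \<Longrightarrow> integrable M (\<eta> k)"
    and mean: "\<And>k. k \<in> K \<Longrightarrow> expectation (\<eta> k) = 0"
    and int2: "\<And>k l. k \<in> K \<Longrightarrow> l \<in> K \<Longrightarrow> integrable M (\<lambda>\<omega>. \<eta> k \<omega> * \<eta> l \<omega>)"
    and uncorr: "\<And>k l. k \<in> K \<Longrightarrow> l \<in> K \<Longrightarrow> k \<noteq> l \<Longrightarrow> expectation (\<lambda>\<omega>. \<eta> k \<omega> * \<eta> l \<omega>) = 0"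
  shows "integrable M (\<lambda>\<omega>. (d + (\<Sum>k\<in>K. g k * \<eta> k \<omega>))\<^sup>2)"
    and "expectation (\<lambda>\<omega>. (d + (\<Sum>k\<in>K. g k * \<eta> k \<omega>))\<^sup>2)
      = d\<^sup>2 + (\<Sum>k\<in>K. (g k)\<^sup>2 * expectation (\<lambda>\<omega>. (\<eta> k \<omega>)\<^sup>2))"
proof -
  have expand: "(\<lambda>\<omega>. (d + (\<Sum>k\<in>K. g k * \<eta> k \<omega>))\<^sup>2) = (\<lambda>\<omega>. d\<^sup>2
      + (\<Sum>k\<in>K. (2 * d * g k) * \<eta> k \<omega>) + (\<Sum>k\<in>K. \<Sum>l\<in>K. (g k * g l) * (\<eta> k \<omega> * \<eta> l \<omega>)))"
    by (simp add: power2_eq_square sum_product algebra_simps sum_distrib_left)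
  show "integrable M (\<lambda>\<omega>. (d + (\<Sum>k\<in>K. g k * \<eta> k \<omega>))\<^sup>2)"
    unfolding expand using int int2 by simp
  have "expectation (\<lambda>\<omega>. \<Sum>k\<in>K. \<Sum>l\<in>K. (g k * g l) * (\<eta> k \<omega> * \<eta> l \<omega>))
      = (\<Sum>k\<in>K. \<Sum>l\<in>K. (g k * g l) * expectation (\<lambda>\<omega>. \<eta> k \<omega> * \<eta> l \<omega>))"
    using int2 by (simp add: integral_sum)
  also have "\<dots> = (\<Sum>k\<in>K. (g k)\<^sup>2 * expectation (\<lambda>\<omega>. (\<eta> k \<omega>)\<^sup>2))"
  proof (rule sum.cong)
    fix k assume k: "k \<in> K"
    have "(\<Sum>l\<in>K. (g k * g l) * expectation (\<lambda>\<omega>. \<eta> k \<omega> * \<eta> l \<omega>))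
        = (\<Sum>l\<in>K. if l = k then (g k)\<^sup>2 * expectation (\<lambda>\<omega>. (\<eta> k \<omega>)\<^sup>2) else 0)"
      using uncorr k by (intro sum.cong) (auto simp: power2_eq_square)
    thus "(\<Sum>l\<in>K. (g k * g l) * expectation (\<lambda>\<omega>. \<eta> k \<omega> * \<eta> l \<omega>))
        = (g k)\<^sup>2 * expectation (\<lambda>\<omega>. (\<eta> k \<omega>)\<^sup>2)"
      using \<open>finite K\<close> k by simp
  qed simp
  finally show "expectation (\<lambda>\<omega>. (d + (\<Sum>k\<in>K. g k * \<eta> k \<omega>))\<^sup>2)
      = d\<^sup>2 + (\<Sum>k\<in>K. (g k)\<^sup>2 * expectation (\<lambda>\<omega>. (\<eta> k \<omega>)\<^sup>2))"
    unfolding expand using int int2 mean by (simp add: integral_sum prob_space)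
qed

text \<open>Indices start at 2: the step from \<open>\<theta>\<^sub>n\<close> to \<open>\<theta>\<^sub>n\<^sub>+\<^sub>1\<close> uses \<open>\<epsilon>\<^sub>n\<^sub>+\<^sub>1\<close>, \<open>n \<ge> 1\<close>.\<close>
locale uncorrelated_noise = prob_space M for M :: "'w measure" +
  fixes \<epsilon> :: "nat \<Rightarrow> 'w \<Rightarrow> real^'d" and C :: "real^'d^'d"
  assumes noise_measurable: "\<And>n. n \<ge> 2 \<Longrightarrow> \<epsilon> n \<in> borel_measurable M"
    and noise_square_integrable: "\<And>n. n \<ge> 2 \<Longrightarrow> integrable M (\<lambda>\<omega>. (norm (\<epsilon> n \<omega>))\<^sup>2)"
    and noise_mean: "\<And>n i. n \<ge> 2 \<Longrightarrow> expectation (\<lambda>\<omega>. \<epsilon> n \<omega> $ i) = 0"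
    and noise_uncorrelated: "\<And>n m i j. n \<ge> 2 \<Longrightarrow> m \<ge> 2 \<Longrightarrow> n \<noteq> m \<Longrightarrow>
           expectation (\<lambda>\<omega>. \<epsilon> n \<omega> $ i * \<epsilon> m \<omega> $ j) = 0"
    and noise_covariance: "\<And>n i j. n \<ge> 2 \<Longrightarrow> expectation (\<lambda>\<omega>. \<epsilon> n \<omega> $ i * \<epsilon> n \<omega> $ j) = C $ i $ j"
begin

lemma noise_inner_measurable:
  "n \<ge> 2 \<Longrightarrow> (\<lambda>\<omega>. c \<bullet> \<epsilon> n \<omega>) \<in> borel_measurable M"
  by (intro borel_measurable_inner borel_measurable_const noise_measurable)

lemma noise_inner_square_integrable:
  assumes "n \<ge> 2"
  shows "integrable M (\<lambda>\<omega>. (c \<bullet> \<epsilon> n \<omega>)\<^sup>2)"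
proof (rule Bochner_Integration.integrable_bound)
  show "integrable M (\<lambda>\<omega>. (norm c)\<^sup>2 * (norm (\<epsilon> n \<omega>))\<^sup>2)"
    using noise_square_integrable[OF assms] by simp
  show "(\<lambda>\<omega>. (c \<bullet> \<epsilon> n \<omega>)\<^sup>2) \<in> borel_measurable M"
    using noise_inner_measurable[OF assms] by measurable
  have "(c \<bullet> x)\<^sup>2 \<le> (norm c)\<^sup>2 * (norm x)\<^sup>2" for x :: "real^'d"
    using Cauchy_Schwarz_ineq2[of c x] by (metis abs_ge_zero power2_abs power_mono power_mult_distrib)
  thus "AE \<omega> in M. norm ((c \<bullet> \<epsilon> n \<omega>)\<^sup>2) \<le> norm ((norm c)\<^sup>2 * (norm (\<epsilon> n \<omega>))\<^sup>2)" by simp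
qed

lemma noise_inner_product_integrable:
  assumes "n \<ge> 2" "m \<ge> 2"
  shows "integrable M (\<lambda>\<omega>. (c \<bullet> \<epsilon> n \<omega>) * (c' \<bullet> \<epsilon> m \<omega>))"
  using noise_inner_measurable[OF assms(1)] noise_inner_measurable[OF assms(2)]
    noise_inner_square_integrable[OF assms(1)] noise_inner_square_integrable[OF assms(2)]
  by (rule integrable_mult_of_square_integrable)

lemma noise_inner_integrable:
  assumes "n \<ge> 2"
  shows "integrable M (\<lambda>\<omega>. c \<bullet> \<epsilon> n \<omega>)"
  using noise_inner_measurable[OF assms] noise_inner_square_integrable[OF assms]
  by (rule square_integrable_imp_integrable)

lemma noise_component_integrable:
  "n \<ge> 2 \<Longrightarrow> integrable M (\<lambda>\<omega>. \<epsilon> n \<omega> $ i)"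
  using noise_inner_integrable[of n "axis i 1"] by (simp add: inner_axis')

lemma noise_component_product_integrable:
  "n \<ge> 2 \<Longrightarrow> m \<ge> 2 \<Longrightarrow> integrable M (\<lambda>\<omega>. \<epsilon> n \<omega> $ i * \<epsilon> m \<omega> $ j)"
  using noise_inner_product_integrable[of n m "axis i 1" "axis j 1"] by (simp add: inner_axis')

lemma noise_inner_mean:
  assumes "n \<ge> 2"
  shows "expectation (\<lambda>\<omega>. c \<bullet> \<epsilon> n \<omega>) = 0"
proof -
  have "expectation (\<lambda>\<omega>. c \<bullet> \<epsilon> n \<omega>) = (\<Sum>i\<in>UNIV. c $ i * expectation (\<lambda>\<omega>. \<epsilon> n \<omega> $ i))"
    unfolding inner_vec_def using noise_component_integrable[OF assms] by (simp add: integral_sum)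
  thus ?thesis using noise_mean[OF assms] by simp
qed

lemma noise_inner_expectation_product:
  assumes "n \<ge> 2" "m \<ge> 2"
  shows "expectation (\<lambda>\<omega>. (c \<bullet> \<epsilon> n \<omega>) * (c' \<bullet> \<epsilon> m \<omega>))
    = (\<Sum>i\<in>UNIV. \<Sum>j\<in>UNIV. c $ i * c' $ j * expectation (\<lambda>\<omega>. \<epsilon> n \<omega> $ i * \<epsilon> m \<omega> $ j))"
proof -
  have "(\<lambda>\<omega>. (c \<bullet> \<epsilon> n \<omega>) * (c' \<bullet> \<epsilon> m \<omega>))
      = (\<lambda>\<omega>. \<Sum>i\<in>UNIV. \<Sum>j\<in>UNIV. c $ i * c' $ j * (\<epsilon> n \<omega> $ i * \<epsilon> m \<omega> $ j))"
    by (simp add: inner_vec_def sum_product algebra_simps)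
  thus ?thesis using noise_component_product_integrable[OF assms] by (simp add: integral_sum)
qed

lemma noise_inner_uncorrelated:
  "n \<ge> 2 \<Longrightarrow> m \<ge> 2 \<Longrightarrow> n \<noteq> m \<Longrightarrow> expectation (\<lambda>\<omega>. (c \<bullet> \<epsilon> n \<omega>) * (c' \<bullet> \<epsilon> m \<omega>)) = 0"
  by (simp add: noise_inner_expectation_product noise_uncorrelated)

lemma noise_expectation_norm_square:
  assumes "n \<ge> 2"
  shows "expectation (\<lambda>\<omega>. (norm (\<epsilon> n \<omega>))\<^sup>2) = trace C"
proof -
  have "(\<lambda>\<omega>. (norm (\<epsilon> n \<omega>))\<^sup>2) = (\<lambda>\<omega>. \<Sum>i\<in>UNIV. \<epsilon> n \<omega> $ i * \<epsilon> n \<omega> $ i)"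
    by (simp add: power2_norm_eq_inner inner_vec_def)
  thus ?thesis
    using noise_component_product_integrable[OF assms assms] noise_covariance[OF assms]
    by (simp add: integral_sum trace_def)
qed

lemma noise_expectation_orthonormal_basis_sum:
  assumes "n \<ge> 2" "finite B" "pairwise orthogonal B" "span B = UNIV" "\<And>v. v \<in> B \<Longrightarrow> norm v = 1"
  shows "(\<Sum>v\<in>B. expectation (\<lambda>\<omega>. (v \<bullet> \<epsilon> n \<omega>)\<^sup>2)) = trace C"
proof -
  have "(\<Sum>v\<in>B. expectation (\<lambda>\<omega>. (v \<bullet> \<epsilon> n \<omega>)\<^sup>2)) = expectation (\<lambda>\<omega>. \<Sum>v\<in>B. (v \<bullet> \<epsilon> n \<omega>)\<^sup>2)"
    using noise_inner_square_integrable[OF assms(1)] by (simp add: integral_sum)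
  also have "\<dots> = expectation (\<lambda>\<omega>. (norm (\<epsilon> n \<omega>))\<^sup>2)"
    using orthonormal_basis_norm_square[OF assms(3,5,4,2)] by simp
  also have "\<dots> = trace C" using noise_expectation_norm_square[OF assms(1)] .
  finally show ?thesis .
qed

end

section \<open>Expected excess risk\<close>

context uncorrelated_noise
begin

lemma noisy_alg_eigen_second_moment:
  fixes H :: "real^'d^'d" and v ts t0 :: "real^'d"
  assumes "\<And>z. v \<bullet> (H *v z) = h * (v \<bullet> z)"
  shows "integrable M (\<lambda>\<omega>. (real n * (v \<bullet> (noisy_alg H ts a b t0 (\<lambda>k. \<epsilon> k \<omega>) n - ts)))\<^sup>2)"
    and "expectation (\<lambda>\<omega>. (real n * (v \<bullet> (noisy_alg H ts a b t0 (\<lambda>k. \<epsilon> k \<omega>) n - ts)))\<^sup>2)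
      = (lucas_U (2 - (a + b) * h) (1 - b * h) n * (v \<bullet> (t0 - ts)))\<^sup>2
        + (\<Sum>k=2..n. (((real k - 1) * a + b) * lucas_U (2 - (a + b) * h) (1 - b * h) (Suc n - k))\<^sup>2
            * expectation (\<lambda>\<omega>. (v \<bullet> \<epsilon> k \<omega>)\<^sup>2))"
  unfolding noisy_alg_eigen_component[OF assms]
  by (rule expectation_square_uncorrelated_sum;
      simp add: noise_inner_integrable noise_inner_mean noise_inner_product_integrable
        noise_inner_uncorrelated)+

lemma noisy_alg_eigen_second_moment_le:
  fixes H :: "real^'d^'d" and v ts t0 :: "real^'d"
  assumes hv: "\<And>z. v \<bullet> (H *v z) = h * (v \<bullet> z)"
    and h: "0 < h" and a: "0 < a" "a * h \<le> 1" and b: "0 \<le> b" "b * h \<le> 1"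
  shows "h * expectation (\<lambda>\<omega>. (real n * (v \<bullet> (noisy_alg H ts a b t0 (\<lambda>k. \<epsilon> k \<omega>) n - ts)))\<^sup>2)
    \<le> 7 / (3 * a) * ((v \<bullet> (t0 - ts))\<^sup>2
      + (\<Sum>k=2..n. ((real k - 1) * a + b)\<^sup>2 * expectation (\<lambda>\<omega>. (v \<bullet> \<epsilon> k \<omega>)\<^sup>2)))"
proof -
  define U where "U = lucas_U (2 - (a + b) * h) (1 - b * h)"
  have U_le: "h * (U m)\<^sup>2 \<le> 7 / (3 * a)" for m
  proof -
    have "a * h * (lucas_U (2 - a * h - b * h) (1 - b * h) m)\<^sup>2 \<le> 7 / 3"
      by (rule lucas_U_bound) (use h a b in auto)
    moreover have "U m = lucas_U (2 - a * h - b * h) (1 - b * h) m"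
      unfolding U_def by (simp add: algebra_simps)
    ultimately have "a * (h * (U m)\<^sup>2) \<le> 7 / 3" by (simp add: mult.assoc)
    thus ?thesis using a by (simp add: pos_le_divide_eq mult_ac)
  qed
  have E_nonneg: "0 \<le> expectation (\<lambda>\<omega>. (v \<bullet> \<epsilon> k \<omega>)\<^sup>2)" for k
    by (rule integral_nonneg_AE) simp
  have "h * expectation (\<lambda>\<omega>. (real n * (v \<bullet> (noisy_alg H ts a b t0 (\<lambda>k. \<epsilon> k \<omega>) n - ts)))\<^sup>2)
      = h * (U n)\<^sup>2 * (v \<bullet> (t0 - ts))\<^sup>2 + (\<Sum>k=2..n. h * (U (Suc n - k))\<^sup>2
          * (((real k - 1) * a + b)\<^sup>2 * expectation (\<lambda>\<omega>. (v \<bullet> \<epsilon> k \<omega>)\<^sup>2)))"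
    unfolding U_def noisy_alg_eigen_second_moment(2)[OF hv]
    by (simp add: power_mult_distrib distrib_left sum_distrib_left mult_ac)
  also have "\<dots> \<le> 7 / (3 * a) * (v \<bullet> (t0 - ts))\<^sup>2 + (\<Sum>k=2..n. 7 / (3 * a)
          * (((real k - 1) * a + b)\<^sup>2 * expectation (\<lambda>\<omega>. (v \<bullet> \<epsilon> k \<omega>)\<^sup>2)))"
    using U_le E_nonneg by (intro add_mono sum_mono mult_right_mono) auto
  also have "\<dots> = 7 / (3 * a) * ((v \<bullet> (t0 - ts))\<^sup>2
      + (\<Sum>k=2..n. ((real k - 1) * a + b)\<^sup>2 * expectation (\<lambda>\<omega>. (v \<bullet> \<epsilon> k \<omega>)\<^sup>2)))"
    by (simp add: distrib_left sum_distrib_left)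
  finally show ?thesis .
qed

lemma expectation_quad_obj_noisy_alg:
  fixes H :: "real^'d^'d" and q ts t0 :: "real^'d" and N :: nat
  assumes sym: "transpose H = H" and Hts: "H *v ts = q" and N: "N \<ge> 1"
    and B: "finite B" "pairwise orthogonal B" "span B = UNIV" "\<And>v. v \<in> B \<Longrightarrow> norm v = 1"
    and eig: "\<And>v. v \<in> B \<Longrightarrow> H *v v = \<kappa> v *\<^sub>R v"
  shows "expectation (\<lambda>\<omega>. quad_obj H q (noisy_alg H ts a b t0 (\<lambda>n. \<epsilon> n \<omega>) N))
    = quad_obj H q ts + (\<Sum>v\<in>B. \<kappa> v / (2 * (real N)\<^sup>2)
        * expectation (\<lambda>\<omega>. (real N * (v \<bullet> (noisy_alg H ts a b t0 (\<lambda>n. \<epsilon> n \<omega>) N - ts)))\<^sup>2))"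
proof -
  define X where "X v \<omega> = (real N * (v \<bullet> (noisy_alg H ts a b t0 (\<lambda>n. \<epsilon> n \<omega>) N - ts)))\<^sup>2" for v \<omega>
  have "quad_obj H q (noisy_alg H ts a b t0 (\<lambda>n. \<epsilon> n \<omega>) N)
      = quad_obj H q ts + (\<Sum>v\<in>B. \<kappa> v / (2 * (real N)\<^sup>2) * X v \<omega>)" for \<omega>
  proof -
    define z where "z = noisy_alg H ts a b t0 (\<lambda>n. \<epsilon> n \<omega>) N - ts"
    have "quad_obj H q (noisy_alg H ts a b t0 (\<lambda>n. \<epsilon> n \<omega>) N) - quad_obj H q ts
        = (\<Sum>v\<in>B. \<kappa> v * (v \<bullet> z)\<^sup>2) / 2"
      using quad_obj_sub_minimizer[OF sym Hts] quadratic_form_eigenbasis_expand[OF sym B eig, of z]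
      by (simp add: z_def)
    also have "\<dots> = (\<Sum>v\<in>B. \<kappa> v / (2 * (real N)\<^sup>2) * X v \<omega>)"
      using N by (simp add: X_def z_def sum_divide_distrib power_mult_distrib)
    finally show ?thesis by simp
  qed
  moreover have "integrable M (X v)" if "v \<in> B" for v
    unfolding X_def
    by (rule noisy_alg_eigen_second_moment(1)[OF symmetric_matrix_eigenvector_inner[OF sym eig[OF that]]])
  ultimately show ?thesis by (simp add: X_def[symmetric] integral_sum prob_space)
qed

theorem noisy_alg_excess_risk_le:
  fixes H :: "real^'d^'d" and q ts t0 :: "real^'d" and N :: nat
  assumes sym: "transpose H = H" and pd: "\<And>x. x \<noteq> 0 \<Longrightarrow> x \<bullet> (H *v x) > 0"
    and L: "\<And>\<mu> v. v \<noteq> 0 \<Longrightarrow> H *v v = \<mu> *\<^sub>R v \<Longrightarrow> \<mu> \<le> L"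
    and Hts: "H *v ts = q" and a: "0 < a" "a \<le> 1 / L" and b: "0 \<le> b" "b \<le> 1 / L"
    and N: "N \<ge> 1"
  shows "expectation (\<lambda>\<omega>. quad_obj H q (noisy_alg H ts a b t0 (\<lambda>n. \<epsilon> n \<omega>) N)) - quad_obj H q ts
    \<le> 7 / (6 * a * (real N)\<^sup>2) * ((norm (t0 - ts))\<^sup>2 + trace C * (\<Sum>k=2..N. ((real k - 1) * a + b)\<^sup>2))"
proof -
  obtain B \<kappa> where B: "finite B" "pairwise orthogonal B" "span B = UNIV" "\<And>v. v \<in> B \<Longrightarrow> norm v = 1"
    and eig: "\<And>v. v \<in> B \<Longrightarrow> H *v v = \<kappa> v *\<^sub>R v"
    using symmetric_matrix_orthonormal_eigenbasis[OF sym] by blast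
  define E where "E v k = expectation (\<lambda>\<omega>. (v \<bullet> \<epsilon> k \<omega>)\<^sup>2)" for v k
  define c where "c k = ((real k - 1) * a + b)\<^sup>2" for k :: nat
  have eigen_le: "\<kappa> v / (2 * (real N)\<^sup>2)
        * expectation (\<lambda>\<omega>. (real N * (v \<bullet> (noisy_alg H ts a b t0 (\<lambda>n. \<epsilon> n \<omega>) N - ts)))\<^sup>2)
      \<le> 7 / (6 * a * (real N)\<^sup>2) * ((v \<bullet> (t0 - ts))\<^sup>2 + (\<Sum>k=2..N. c k * E v k))"
    if "v \<in> B" for v
  proof -
    have "v \<noteq> 0" using B(4)[OF that] by auto
    note \<kappa> = positive_eigenvalue_bounds[OF pd[OF \<open>v \<noteq> 0\<close>] eig[OF that] L[OF \<open>v \<noteq> 0\<close> eig[OF that]]]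
    have "\<kappa> v * expectation (\<lambda>\<omega>. (real N * (v \<bullet> (noisy_alg H ts a b t0 (\<lambda>n. \<epsilon> n \<omega>) N - ts)))\<^sup>2)
        / (2 * (real N)\<^sup>2) \<le> 7 / (3 * a) * ((v \<bullet> (t0 - ts))\<^sup>2 + (\<Sum>k=2..N. c k * E v k)) / (2 * (real N)\<^sup>2)"
      unfolding c_def E_def
      by (intro divide_right_mono noisy_alg_eigen_second_moment_le
          symmetric_matrix_eigenvector_inner[OF sym eig[OF that]] \<kappa>(1) \<kappa>(2)[OF a(2)] \<kappa>(2)[OF b(2)] a(1) b(1))
        simp
    thus ?thesis by (simp add: field_simps)
  qed
  have "expectation (\<lambda>\<omega>. quad_obj H q (noisy_alg H ts a b t0 (\<lambda>n. \<epsilon> n \<omega>) N)) - quad_obj H q ts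
      = (\<Sum>v\<in>B. \<kappa> v / (2 * (real N)\<^sup>2)
          * expectation (\<lambda>\<omega>. (real N * (v \<bullet> (noisy_alg H ts a b t0 (\<lambda>n. \<epsilon> n \<omega>) N - ts)))\<^sup>2))"
    using expectation_quad_obj_noisy_alg[OF sym Hts N B eig] by simp
  also have "\<dots> \<le> (\<Sum>v\<in>B. 7 / (6 * a * (real N)\<^sup>2) * ((v \<bullet> (t0 - ts))\<^sup>2 + (\<Sum>k=2..N. c k * E v k)))"
    by (rule sum_mono) (rule eigen_le)
  also have "\<dots> = 7 / (6 * a * (real N)\<^sup>2)
      * ((\<Sum>v\<in>B. (v \<bullet> (t0 - ts))\<^sup>2) + (\<Sum>k=2..N. c k * (\<Sum>v\<in>B. E v k)))"
    by (simp add: sum_distrib_left sum.distrib sum.swap[of _ B] distrib_left mult_ac sum_divide_distrib)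
  also have "(\<Sum>k=2..N. c k * (\<Sum>v\<in>B. E v k)) = trace C * (\<Sum>k=2..N. ((real k - 1) * a + b)\<^sup>2)"
    unfolding E_def c_def sum_distrib_left[of "trace C"]
    by (intro sum.cong) (simp_all add: noise_expectation_orthonormal_basis_sum[OF _ B] mult.commute)
  also have "(\<Sum>v\<in>B. (v \<bullet> (t0 - ts))\<^sup>2) = (norm (t0 - ts))\<^sup>2"
    using orthonormal_basis_norm_square[OF B(2,4,3,1)] by simp
  finally show ?thesis .
qed

end

section \<open>The rate for the tuned step size\<close>

lemma sum_shifted_squares:
  fixes c :: real
  shows "n \<ge> 1 \<Longrightarrow> (\<Sum>k\<in>{2..n}. (real k - 1 + c)\<^sup>2)
     = (real n - 1) * c\<^sup>2 + c * (real n - 1) * real n + (real n - 1) * real n * (2 * real n - 1) / 6"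
proof (induction n rule: nat_induct_at_least)
  case base then show ?case by simp
next
  case (Suc n)
  have "{2..Suc n} = insert (Suc n) {2..n}" using Suc.hyps by (auto simp: atLeastAtMostSuc_conv)
  hence "(\<Sum>k\<in>{2..Suc n}. (real k - 1 + c)\<^sup>2) = (real n + c)\<^sup>2 + (\<Sum>k\<in>{2..n}. (real k - 1 + c)\<^sup>2)"
    by simp
  also have "\<dots> = (real n + c)\<^sup>2 + ((real n - 1) * c\<^sup>2 + c * (real n - 1) * real n + (real n - 1) * real n * (2 * real n - 1) / 6)"
    using Suc.IH by simp
  also have "\<dots> = (real (Suc n) - 1) * c\<^sup>2 + c * (real (Suc n) - 1) * real (Suc n) + (real (Suc n) - 1) * real (Suc n) * (2 * real (Suc n) - 1) / 6"
    by (simp add: power2_eq_square field_simps)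
  finally show ?case .
qed

lemma sum_step_weights_square_le:
  fixes \<alpha> \<beta> :: real
  assumes N: "N \<ge> 1" and a: "0 \<le> \<alpha>" and b: "0 \<le> \<beta>" "\<beta> \<le> real N * \<alpha>"
  shows "(\<Sum>k\<in>{2..N}. ((real k - 1) * \<alpha> + \<beta>)\<^sup>2) \<le> \<alpha>\<^sup>2 * (7 / 3 * (real N)^3)"
proof -
  have "(\<Sum>k\<in>{2..N}. ((real k - 1) * \<alpha> + \<beta>)\<^sup>2) \<le> (\<Sum>k\<in>{2..N}. \<alpha>\<^sup>2 * (real k - 1 + real N)\<^sup>2)"
  proof (rule sum_mono)
    fix k assume k: "k \<in> {2..N}"
    have h0: "0 \<le> (real k - 1) * \<alpha> + \<beta>" using k a b by simp
    have "(real k - 1) * \<alpha> + \<beta> \<le> \<alpha> * (real k - 1 + real N)" using b by (simp add: algebra_simps)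
    hence "((real k - 1) * \<alpha> + \<beta>)\<^sup>2 \<le> (\<alpha> * (real k - 1 + real N))\<^sup>2"
      using h0 by (intro power_mono) auto
    thus "((real k - 1) * \<alpha> + \<beta>)\<^sup>2 \<le> \<alpha>\<^sup>2 * (real k - 1 + real N)\<^sup>2" by (simp add: power_mult_distrib)
  qed
  also have "\<dots> = \<alpha>\<^sup>2 * (\<Sum>k\<in>{2..N}. (real k - 1 + real N)\<^sup>2)" by (simp add: sum_distrib_left)
  also have "(\<Sum>k\<in>{2..N}. (real k - 1 + real N)\<^sup>2) = (real N - 1) * real N * (14 * real N - 1) / 6"
    using sum_shifted_squares[OF N, of "real N"] by (simp add: power2_eq_square field_simps)
  also have "\<dots> \<le> 7 / 3 * (real N)^3"
  proof -
    have "0 \<le> real N" by simp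
    hence "(real N - 1) * real N * (14 * real N - 1) \<le> 14 * (real N)^3"
      using N by (simp add: power3_eq_cube algebra_simps)
    thus ?thesis by linarith
  qed
  finally show ?thesis using a by (simp add: mult_left_mono)
qed

lemma min_step_size_bounds:
  fixes A L :: real
  assumes "0 < A" "0 < L"
  shows "0 < min A (1 / L)" "min A (1 / L) \<le> A" "1 / min A (1 / L) \<le> L + 1 / A"
  using assms by (auto simp: min_def)

lemma tuned_step_size_rate:
  fixes R S L \<alpha> \<beta> :: real and N :: nat
  assumes R: "0 < R" and S: "0 < S" and L: "0 < L" and N: "N \<ge> 1"
    and \<alpha>: "\<alpha> = min (R / (2 * S * real N powr (3/2))) (1 / L)"
    and \<beta>: "0 \<le> \<beta>" "\<beta> \<le> real N * \<alpha>"
  shows "7 / (6 * \<alpha> * (real N)\<^sup>2) * (R\<^sup>2 + S\<^sup>2 * (\<Sum>k=2..N. ((real k - 1) * \<alpha> + \<beta>)\<^sup>2))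
    \<le> 2 * L * R\<^sup>2 / (real N)\<^sup>2 + 4 * S * R / sqrt (real N)"
proof -
  define u where "u = sqrt (real N)"
  define A where "A = R / (2 * S * u ^ 3)"
  have u0: "0 < u" "real N = u\<^sup>2" using N by (simp_all add: u_def)
  hence u: "0 < u" "real N = u\<^sup>2" "(real N)\<^sup>2 = u ^ 4" by (simp_all add: power_mult[symmetric])
  have "real N powr (3/2) = real N * real N powr (1/2)"
    using N powr_add[of "real N" 1 "1/2"] by simp
  hence "real N powr (3/2) = u ^ 3" using N by (simp add: powr_half_sqrt u_def power3_eq_cube)
  hence \<alpha>A: "0 < \<alpha>" "\<alpha> \<le> A" "1 / \<alpha> \<le> L + 1 / A"
    using min_step_size_bounds[of A L] R S L u unfolding \<alpha> A_def by simp_all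
  have "7 / (6 * \<alpha> * (real N)\<^sup>2) * (R\<^sup>2 + S\<^sup>2 * (\<Sum>k=2..N. ((real k - 1) * \<alpha> + \<beta>)\<^sup>2))
      \<le> 7 / (6 * \<alpha> * (real N)\<^sup>2) * (R\<^sup>2 + S\<^sup>2 * (\<alpha>\<^sup>2 * (7 / 3 * (real N) ^ 3)))"
    using sum_step_weights_square_le[OF N _ \<beta>] \<alpha>A(1)
    by (intro mult_left_mono add_left_mono) (auto intro: mult_left_mono)
  also have "\<dots> = 7 * R\<^sup>2 / (6 * u ^ 4) * (1 / \<alpha>) + 49 / 18 * S\<^sup>2 * u\<^sup>2 * \<alpha>"
    using \<alpha>A(1) u unfolding u(2) by (simp add: field_simps power2_eq_square power3_eq_cube)
  also have "\<dots> \<le> 7 * R\<^sup>2 / (6 * u ^ 4) * (L + 1 / A) + 49 / 18 * S\<^sup>2 * u\<^sup>2 * A"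
    using \<alpha>A u by (intro add_mono mult_left_mono) auto
  also have "\<dots> = 7 / 6 * (L * R\<^sup>2 / u ^ 4) + 133 / 36 * (S * R / u)"
    using R S u unfolding A_def
    by (simp add: field_simps power2_eq_square power3_eq_cube eval_nat_numeral)
  also have "\<dots> \<le> 2 * (L * R\<^sup>2 / u ^ 4) + 4 * (S * R / u)"
    using L R S u by (intro add_mono mult_right_mono) auto
  also have "\<dots> = 2 * L * R\<^sup>2 / (real N)\<^sup>2 + 4 * S * R / sqrt (real N)"
    unfolding u(3) u_def[symmetric] by simp
  finally show ?thesis .
qed

theorem corollary2:
  fixes M :: "'w measure"
    and H C :: "real^'d^'d" and q \<theta>0 :: "real^'d" and L :: real
    and \<epsilon> :: "nat \<Rightarrow> 'w \<Rightarrow> real^'d"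
    and N :: nat and \<alpha> \<beta> :: real
  assumes "prob_space M"
    and H_sym: "transpose H = H"
    and H_pd: "\<And>x. x \<noteq> 0 \<Longrightarrow> x \<bullet> (H *v x) > 0"
    and L_eig: "\<exists>v. v \<noteq> 0 \<and> H *v v = L *\<^sub>R v"
    and L_max: "\<And>\<mu> v. v \<noteq> 0 \<Longrightarrow> H *v v = \<mu> *\<^sub>R v \<Longrightarrow> \<mu> \<le> L"
    and eps_meas: "\<And>n. n \<ge> 2 \<Longrightarrow> \<epsilon> n \<in> borel_measurable M"
    and eps_L2: "\<And>n. n \<ge> 2 \<Longrightarrow> integrable M (\<lambda>\<omega>. (norm (\<epsilon> n \<omega>))\<^sup>2)"
    and eps_mean: "\<And>n i. n \<ge> 2 \<Longrightarrow> prob_space.expectation M (\<lambda>\<omega>. \<epsilon> n \<omega> $ i) = 0"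
    and eps_uncorr: "\<And>n m i j. n \<ge> 2 \<Longrightarrow> m \<ge> 2 \<Longrightarrow> n \<noteq> m \<Longrightarrow>
           prob_space.expectation M (\<lambda>\<omega>. \<epsilon> n \<omega> $ i * \<epsilon> m \<omega> $ j) = 0"
    and eps_cov: "\<And>n i j. n \<ge> 2 \<Longrightarrow>
           prob_space.expectation M (\<lambda>\<omega>. \<epsilon> n \<omega> $ i * \<epsilon> n \<omega> $ j) = C $ i $ j"
    and trC: "trace C > 0"
    and ne: "\<theta>0 \<noteq> matrix_inv H *v q"
    and N: "N \<ge> 1"
    and \<alpha>_def: "\<alpha> = min (norm (\<theta>0 - matrix_inv H *v q) / (2 * sqrt (trace C) * real N powr (3/2))) (1 / L)"
    and \<beta>_ge: "0 \<le> \<beta>" and \<beta>_le: "\<beta> \<le> min (real N * \<alpha>) (1 / L)"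
  shows "prob_space.expectation M
           (\<lambda>\<omega>. quad_obj H q (noisy_alg H (matrix_inv H *v q) \<alpha> \<beta> \<theta>0 (\<lambda>n. \<epsilon> n \<omega>) N))
         - quad_obj H q (matrix_inv H *v q)
         \<le> 2 * L * (norm (\<theta>0 - matrix_inv H *v q))\<^sup>2 / (real N)\<^sup>2
           + 4 * sqrt (trace C) * norm (\<theta>0 - matrix_inv H *v q) / sqrt (real N)"
proof -
  interpret uncorrelated_noise M \<epsilon> C
    by (intro uncorrelated_noise.intro uncorrelated_noise_axioms.intro)
      (fact assms(1) eps_meas eps_L2 eps_mean eps_uncorr eps_cov)+
  define ts where "ts = matrix_inv H *v q"
  define R where "R = norm (\<theta>0 - ts)"
  define S where "S = sqrt (trace C)"
  obtain v where v: "v \<noteq> 0" "H *v v = L *\<^sub>R v" using L_eig by blast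
  have L0: "0 < L" using positive_eigenvalue_bounds(1)[OF H_pd[OF v(1)] v(2) order_refl] .
  have R0: "0 < R" and S0: "0 < S" using ne trC by (simp_all add: R_def S_def ts_def)
  hence \<alpha>0: "0 < \<alpha>" using L0 N by (simp add: \<alpha>_def R_def S_def ts_def)
  have "expectation (\<lambda>\<omega>. quad_obj H q (noisy_alg H ts \<alpha> \<beta> \<theta>0 (\<lambda>n. \<epsilon> n \<omega>) N))
      - quad_obj H q ts
      \<le> 7 / (6 * \<alpha> * (real N)\<^sup>2) * (R\<^sup>2 + trace C * (\<Sum>k=2..N. ((real k - 1) * \<alpha> + \<beta>)\<^sup>2))"
    unfolding R_def
    by (rule noisy_alg_excess_risk_le[OF H_sym H_pd L_max _ \<alpha>0 _ \<beta>_ge _ N])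
      (use \<alpha>_def \<beta>_le positive_definite_matrix_inv_solves[OF H_pd] in \<open>simp_all add: ts_def\<close>)
  also have "\<dots> \<le> 2 * L * R\<^sup>2 / (real N)\<^sup>2 + 4 * S * R / sqrt (real N)"
    using tuned_step_size_rate[OF R0 S0 L0 N _ \<beta>_ge] \<alpha>_def \<beta>_le trC
    by (simp add: R_def S_def ts_def)
  finally show ?thesis by (simp add: R_def S_def ts_def)
qed

end
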